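(* Let $\Omega\subset\mathbb{R}^d$ be bounded, $T>0$, $Q_T=\Omega\times(0,T)$, $\alpha\in(0,1)$, and let $a_1,a_2,a_3$ be positive constants. Assume $f,g\in C^{\alpha,\alpha/2}(\bar Q_T)$ and $u_0\in C^\alpha(\bar\Omega)$. Then any (weak) solution $u\in L^\infty(Q_T)$ of $\partial_t u=a_1fu+a_2g-a_3u^2$ in $Q_T$, $u(x,0)=u_0(x)$ for $x\in\Omega$, belongs to $C^{\alpha,\alpha/2}(\bar Q_T)$, i.e. is $\alpha$-Hölder continuous on $\bar\Omega\times[0,T]$.
   Context: $C^{\alpha,\alpha/2}(\bar Q_T)$ is the space of bounded functions $u$ with finite seminorm $\sup_{(x_1,t_1)\ne(x_2,t_2)}\frac{|u(x_1,t_1)-u(x_2,t_2)|}{|x_1-x_2|^\alpha+|t_1-t_2|^{\alpha/2}}$, with norm $\|u\|_{L^\infty}$ plus this seminorm. *)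

theory Defs
  imports "HOL-Analysis.Analysis"
begin

definition holder_space :: "'a::metric_space set \<Rightarrow> real \<Rightarrow> ('a \<Rightarrow> real) \<Rightarrow> bool" where
  "holder_space S \<alpha> u \<longleftrightarrow> bounded (u ` S) \<and>
     (\<exists>C. \<forall>x\<in>S. \<forall>y\<in>S. \<bar>u x - u y\<bar> \<le> C * dist x y powr \<alpha>)"

definition par_holder_space ::
    "('a::euclidean_space \<times> real) set \<Rightarrow> real \<Rightarrow> ('a \<times> real \<Rightarrow> real) \<Rightarrow> bool" where
  "par_holder_space S \<alpha> u \<longleftrightarrow> bounded (u ` S) \<and>
     (\<exists>C. \<forall>p\<in>S. \<forall>q\<in>S. \<bar>u p - u q\<bar> \<le>
        C * (norm (fst p - fst q) powr \<alpha> + \<bar>snd p - snd q\<bar> powr (\<alpha> / 2)))"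

text \<open>Weak solution u in L^infty(Q_T) of  d_t u = a1 f u + a2 g - a3 u^2,  u(.,0) = u0,
  in integral form: u is measurable, essentially bounded on Q_T, and for a.e. x in Omega,
  for a.e. t in (0,T), u(x,t) = u0 x + int_0^t (a1 f u + a2 g - a3 u^2)(x,s) ds.\<close>
definition weak_solution ::
    "'a::euclidean_space set \<Rightarrow> real \<Rightarrow> real \<Rightarrow> real \<Rightarrow> real \<Rightarrow> ('a \<times> real \<Rightarrow> real)
      \<Rightarrow> ('a \<times> real \<Rightarrow> real) \<Rightarrow> ('a \<Rightarrow> real) \<Rightarrow> ('a \<times> real \<Rightarrow> real) \<Rightarrow> bool" where
  "weak_solution \<Omega> T a1 a2 a3 f g u0 u \<longleftrightarrow>
     u \<in> borel_measurable lborel \<and>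
     (\<exists>M. AE p in lborel. p \<in> \<Omega> \<times> {0<..<T} \<longrightarrow> \<bar>u p\<bar> \<le> M) \<and>
     (AE x in lborel. x \<in> \<Omega> \<longrightarrow>
        (AE t in lborel. t \<in> {0<..<T} \<longrightarrow>
           u (x, t) = u0 x + (LINT s:{0..t}|lborel.
              a1 * f (x, s) * u (x, s) + a2 * g (x, s) - a3 * (u (x, s))\<^sup>2)))"

end

theory Submission
  imports Defs
begin

text \<open>
  By Fubini, for almost every \<open>x \<in> \<Omega>\<close> the fibre \<open>u(x, -)\<close> is bounded by some \<open>M\<close> and
  satisfies the integral equation for almost every \<open>t\<close>. The right-hand side \<open>W(x, t)\<close> of that
  equation is Lipschitz in \<open>t\<close>, because the integrand is bounded. The reaction term is Lipschitz in
  \<open>u\<close> on \<open>[-M, M]\<close> and \<open>\<alpha>\<close>-Hoelder in \<open>x\<close>, so Gronwall's inequality for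
  \<open>W(x, -) - W(y, -)\<close> gives \<open>|W(x, t) - W(y, t)| \<le> C |x - y|^\<alpha>\<close>. On the bounded interval
  \<open>[0, T]\<close> the Lipschitz bound in time dominates the \<open>\<alpha>/2\<close>-Hoelder one, hence \<open>W\<close> is parabolic
  \<open>\<alpha>\<close>-Hoelder on the good fibres. These are dense in \<open>\<Omega>\<close>, so \<open>W\<close> extends continuously to
  \<open>closure \<Omega> \<times> [0, T]\<close>, and the extension is the required representative of \<open>u\<close>.
\<close>

lemma uniformly_continuous_on_modulus:
  assumes bound: "\<And>x y. x \<in> S \<Longrightarrow> y \<in> S \<Longrightarrow> dist (k x) (k y) \<le> \<omega> (dist x y)"
    and \<omega>: "(\<omega> \<longlongrightarrow> 0) (at_right 0)"
  shows "uniformly_continuous_on S k"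
  unfolding uniformly_continuous_on_def
proof (intro allI impI)
  fix e :: real assume "e > 0"
  then obtain d where d: "d > 0" "\<And>r. 0 < r \<Longrightarrow> r < d \<Longrightarrow> \<bar>\<omega> r\<bar> < e"
    using \<omega> unfolding tendsto_iff eventually_at_right_field by (force simp: dist_real_def)
  have "dist (k x') (k x) < e" if "x \<in> S" "x' \<in> S" "dist x' x < d" for x x'
  proof (cases "x' = x")
    case False
    then show ?thesis
      using bound[OF that(2,1)] d(2)[of "dist x' x"] that(3) by auto
  qed (use \<open>e > 0\<close> in simp)
  then show "\<exists>d>0. \<forall>x\<in>S. \<forall>x'\<in>S. dist x' x < d \<longrightarrow> dist (k x') (k x) < e"
    using d(1) by blast
qed

definition par_holder_on ::
    "real \<Rightarrow> real \<Rightarrow> ('a::real_normed_vector \<times> real) set \<Rightarrow> ('a \<times> real \<Rightarrow> real) \<Rightarrow> bool" where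
  "par_holder_on C \<alpha> X u \<longleftrightarrow> (\<forall>p\<in>X. \<forall>q\<in>X.
     \<bar>u p - u q\<bar> \<le> C * (norm (fst p - fst q) powr \<alpha> + \<bar>snd p - snd q\<bar> powr (\<alpha> / 2)))"

lemma par_holder_onD:
  "par_holder_on C \<alpha> X u \<Longrightarrow> p \<in> X \<Longrightarrow> q \<in> X \<Longrightarrow>
     \<bar>u p - u q\<bar> \<le> C * (norm (fst p - fst q) powr \<alpha> + \<bar>snd p - snd q\<bar> powr (\<alpha> / 2))"
  by (simp add: par_holder_on_def)

lemma par_holder_space_iff:
  "par_holder_space S \<alpha> u \<longleftrightarrow> bounded (u ` S) \<and> (\<exists>C. par_holder_on C \<alpha> S u)"
  by (simp add: par_holder_space_def par_holder_on_def)

lemma par_holder_on_mono: "par_holder_on C \<alpha> X u \<Longrightarrow> C \<le> C' \<Longrightarrow> par_holder_on C' \<alpha> X u"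
  unfolding par_holder_on_def by (meson order_trans mult_right_mono add_nonneg_nonneg powr_ge_zero)

lemma par_holder_spaceE:
  assumes "par_holder_space S \<alpha> u"
  obtains B C where "0 \<le> B" "0 \<le> C" "\<And>p. p \<in> S \<Longrightarrow> \<bar>u p\<bar> \<le> B" "par_holder_on C \<alpha> S u"
proof -
  obtain B C where "\<And>p. p \<in> S \<Longrightarrow> \<bar>u p\<bar> \<le> B" "par_holder_on C \<alpha> S u"
    using assms unfolding par_holder_space_iff bounded_real by auto
  then show thesis
    using that[of "\<bar>B\<bar>" "\<bar>C\<bar>"] par_holder_on_mono[of C \<alpha> S u "\<bar>C\<bar>"] by force
qed

lemma holder_spaceE:
  assumes "holder_space S \<alpha> u"
  obtains C where "0 \<le> C" "\<And>x y. x \<in> S \<Longrightarrow> y \<in> S \<Longrightarrow> \<bar>u x - u y\<bar> \<le> C * dist x y powr \<alpha>"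
proof -
  obtain C where "\<And>x y. x \<in> S \<Longrightarrow> y \<in> S \<Longrightarrow> \<bar>u x - u y\<bar> \<le> C * dist x y powr \<alpha>"
    using assms unfolding holder_space_def by auto
  then show thesis
    using that[of "\<bar>C\<bar>"] by (meson abs_ge_self abs_ge_zero order_trans mult_right_mono powr_ge_zero)
qed

lemma par_holder_on_uniformly_continuous_on:
  assumes "par_holder_on C \<alpha> X u" "0 < \<alpha>"
  shows "uniformly_continuous_on X u"
proof (rule uniformly_continuous_on_modulus)
  fix p q assume pq: "p \<in> X" "q \<in> X"
  have "norm (fst p - fst q) powr \<alpha> \<le> dist p q powr \<alpha>"
    using dist_fst_le[of p q] \<open>0 < \<alpha>\<close> by (intro powr_mono2) (auto simp: dist_norm)
  moreover have "\<bar>snd p - snd q\<bar> powr (\<alpha> / 2) \<le> dist p q powr (\<alpha> / 2)"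
    using dist_snd_le[of p q] \<open>0 < \<alpha>\<close> by (intro powr_mono2) (auto simp: dist_real_def)
  ultimately have "C * (norm (fst p - fst q) powr \<alpha> + \<bar>snd p - snd q\<bar> powr (\<alpha> / 2))
      \<le> \<bar>C\<bar> * (dist p q powr \<alpha> + dist p q powr (\<alpha> / 2))"
    by (meson abs_ge_self abs_ge_zero add_mono add_nonneg_nonneg order_trans mult_mono powr_ge_zero)
  then show "dist (u p) (u q) \<le> \<bar>C\<bar> * (dist p q powr \<alpha> + dist p q powr (\<alpha> / 2))"
    using par_holder_onD[OF assms(1) pq] by (simp add: dist_real_def)
next
  have "((\<lambda>r. r powr \<beta>) \<longlongrightarrow> 0) (at_right 0)" if "0 < \<beta>" for \<beta> :: real
    by (rule tendsto_zero_powrI) (auto intro: that eventually_at_rightI[of 0 1])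
  then have "((\<lambda>r. \<bar>C\<bar> * (r powr \<alpha> + r powr (\<alpha> / 2))) \<longlongrightarrow> \<bar>C\<bar> * (0 + 0)) (at_right 0)"
    using \<open>0 < \<alpha>\<close> by (intro tendsto_mult tendsto_add tendsto_const) auto
  then show "((\<lambda>r. \<bar>C\<bar> * (r powr \<alpha> + r powr (\<alpha> / 2))) \<longlongrightarrow> 0) (at_right 0)"
    by simp
qed

lemma par_holder_on_continuous_on:
  assumes "par_holder_on C \<alpha> X u" "0 < \<alpha>"
  shows "continuous_on X u"
  using par_holder_on_uniformly_continuous_on[OF assms] by (rule uniformly_continuous_imp_continuous)

lemma par_holder_on_continuous_on_fibre:
  assumes "par_holder_on C \<alpha> (D \<times> I) u" "0 < \<alpha>" "x \<in> D"
  shows "continuous_on I (\<lambda>s. u (x, s))"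
  by (rule continuous_on_compose2[OF par_holder_on_continuous_on[OF assms(1,2)]])
    (use \<open>x \<in> D\<close> in \<open>auto intro: continuous_intros\<close>)

lemma par_holder_on_closure:
  assumes cont: "continuous_on (closure X) u" and u: "par_holder_on C \<alpha> X u" and "0 < \<alpha>"
  shows "par_holder_on C \<alpha> (closure X) u"
proof -
  define \<delta> where "\<delta> z = \<bar>u (fst z) - u (snd z)\<bar> - C * (norm (fst (fst z) - fst (snd z)) powr \<alpha>
      + \<bar>snd (fst z) - snd (snd z)\<bar> powr (\<alpha> / 2))" for z
  have "continuous_on (closure (X \<times> X)) \<delta>"
    unfolding \<delta>_def closure_Times using \<open>0 < \<alpha>\<close>
    by (intro continuous_intros continuous_on_powr' continuous_on_compose2[OF cont]) auto
  then have "\<delta> z \<le> 0" if "z \<in> closure (X \<times> X)" for z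
  proof (rule continuous_le_on_closure[OF _ that])
    fix z assume "z \<in> X \<times> X"
    then show "\<delta> z \<le> 0"
      using par_holder_onD[OF u, of "fst z" "snd z"] by (simp add: \<delta>_def mem_Times_iff)
  qed
  then show ?thesis
    unfolding par_holder_on_def closure_Times by (force simp: \<delta>_def)
qed

lemma par_holder_space_closure_extension:
  fixes u :: "'a::euclidean_space \<times> real \<Rightarrow> real"
  assumes "bounded X" "par_holder_on C \<alpha> X u" "0 < \<alpha>"
  obtains v where "par_holder_space (closure X) \<alpha> v" "\<And>p. p \<in> X \<Longrightarrow> v p = u p"
proof -
  obtain v where v: "uniformly_continuous_on (closure X) v" "\<And>p. p \<in> X \<Longrightarrow> u p = v p"
    using uniformly_continuous_on_extension_on_closure
      par_holder_on_uniformly_continuous_on[OF assms(2,3)] by metis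
  have cont: "continuous_on (closure X) v"
    using v(1) by (rule uniformly_continuous_imp_continuous)
  have "par_holder_on C \<alpha> X v"
    using assms(2) v(2) by (simp add: par_holder_on_def)
  then have "par_holder_on C \<alpha> (closure X) v"
    using par_holder_on_closure[OF cont _ assms(3)] by blast
  moreover have "bounded (v ` closure X)"
    using assms(1) cont by (intro compact_imp_bounded compact_continuous_image) (auto simp: compact_closure)
  ultimately show thesis
    using that v(2) by (force simp: par_holder_space_iff)
qed

lemma self_le_powr_mult_powr:
  fixes r T \<beta> :: real
  assumes "0 \<le> r" "r \<le> T" "\<beta> \<le> 1"
  shows "r \<le> T powr (1 - \<beta>) * r powr \<beta>"
proof -
  have "r = r powr (1 - \<beta>) * r powr \<beta>"
    using assms(1) by (simp flip: powr_add)
  also have "\<dots> \<le> T powr (1 - \<beta>) * r powr \<beta>"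
    using assms by (intro mult_right_mono powr_mono2) auto
  finally show ?thesis .
qed

lemma par_holder_on_Times_Icc:
  assumes space: "\<And>x y t. x \<in> G \<Longrightarrow> y \<in> G \<Longrightarrow> t \<in> {0..T} \<Longrightarrow>
      \<bar>u (x, t) - u (y, t)\<bar> \<le> A * norm (x - y) powr \<alpha>"
    and time: "\<And>x. x \<in> G \<Longrightarrow> B-lipschitz_on {0..T} (\<lambda>t. u (x, t))"
    and "0 \<le> A" "\<alpha> \<le> 2"
  shows "par_holder_on (A + B * T powr (1 - \<alpha> / 2)) \<alpha> (G \<times> {0..T}) u"
  unfolding par_holder_on_def
proof (intro ballI)
  fix p q assume "p \<in> G \<times> {0..T}" "q \<in> G \<times> {0..T}"
  then obtain x t y s where pq: "p = (x, t)" "q = (y, s)"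
    and x: "x \<in> G" "t \<in> {0..T}" and y: "y \<in> G" "s \<in> {0..T}"
    by auto
  define T' where "T' = T powr (1 - \<alpha> / 2)"
  define n where "n = norm (x - y) powr \<alpha>"
  define m where "m = \<bar>t - s\<bar> powr (\<alpha> / 2)"
  have "0 \<le> B" "0 \<le> n" "0 \<le> m" "0 \<le> T'"
    using lipschitz_on_nonneg[OF time[OF y(1)]] by (simp_all add: n_def m_def T'_def)
  have "\<bar>u (x, t) - u (y, s)\<bar> \<le> \<bar>u (x, t) - u (y, t)\<bar> + \<bar>u (y, t) - u (y, s)\<bar>"
    by linarith
  also have "\<dots> \<le> A * n + B * \<bar>t - s\<bar>"
    using space[OF x(1) y(1) x(2)] lipschitz_onD[OF time[OF y(1)] x(2) y(2)]
    by (simp add: n_def dist_real_def)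
  also have "\<dots> \<le> A * n + B * (T' * m)"
    unfolding m_def T'_def using x(2) y(2) \<open>0 \<le> B\<close> \<open>\<alpha> \<le> 2\<close>
    by (intro add_left_mono mult_left_mono self_le_powr_mult_powr) auto
  also have "\<dots> \<le> (A + B * T') * (n + m)"
    using \<open>0 \<le> A\<close> \<open>0 \<le> B\<close> \<open>0 \<le> n\<close> \<open>0 \<le> m\<close> \<open>0 \<le> T'\<close>
    by (simp add: algebra_simps add_increasing)
  finally show "\<bar>u p - u q\<bar>
      \<le> (A + B * T powr (1 - \<alpha> / 2)) * (norm (fst p - fst q) powr \<alpha> + \<bar>snd p - snd q\<bar> powr (\<alpha> / 2))"
    by (simp add: pq n_def m_def T'_def)
qed

lemma gronwall_inequality:
  fixes \<phi> :: "real \<Rightarrow> real"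
  assumes cont: "continuous_on {0..T} \<phi>" and L: "0 \<le> L"
    and le: "\<And>t. t \<in> {0..T} \<Longrightarrow> \<phi> t \<le> A + L * integral {0..t} \<phi>"
    and t: "t \<in> {0..T}"
  shows "\<phi> t \<le> A * exp (L * t)"
proof -
  define \<Phi> where "\<Phi> s = integral {0..s} \<phi>" for s
  define \<psi> where "\<psi> s = (A + L * \<Phi> s) * exp (- L * s)" for s
  have \<Phi>_deriv: "(\<Phi> has_real_derivative \<phi> s) (at s within {0..T})" if "s \<in> {0..T}" for s
    using integral_has_vector_derivative[OF cont that] unfolding \<Phi>_def
    by (simp add: has_real_derivative_iff_has_vector_derivative)
  have \<psi>_deriv: "(\<psi> has_real_derivative L * exp (- L * s) * (\<phi> s - (A + L * \<Phi> s)))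
      (at s within {0..T})" if "s \<in> {0..T}" for s
    unfolding \<psi>_def
    by (rule DERIV_cong, (rule derivative_eq_intros \<Phi>_deriv[OF that] refl)+)
      (simp add: algebra_simps)
  have "\<psi> t \<le> \<psi> 0"
  proof (rule DERIV_nonpos_imp_decreasing_open[of 0 t])
    show "0 \<le> t" using t by simp
  next
    fix s assume s: "0 < s" "s < t"
    then have "at s within {0..T} = at s"
      using t by (intro at_within_Icc_at) auto
    moreover have "L * exp (- L * s) * (\<phi> s - (A + L * \<Phi> s)) \<le> 0"
      using le[of s] s t L unfolding \<Phi>_def by (intro mult_nonneg_nonpos) auto
    ultimately show "\<exists>y. (\<psi> has_real_derivative y) (at s) \<and> y \<le> 0"
      using \<psi>_deriv[of s] s t by auto
  next
    have "continuous_on {0..T} \<psi>"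
      using \<psi>_deriv by (meson DERIV_continuous continuous_on_eq_continuous_within)
    then show "continuous_on {0..t} \<psi>"
      by (rule continuous_on_subset) (use t in auto)
  qed
  also have "\<psi> 0 = A"
    by (simp add: \<psi>_def \<Phi>_def)
  finally have "A + L * \<Phi> t \<le> A * exp (L * t)"
    by (simp add: \<psi>_def exp_minus field_simps)
  then show ?thesis
    using le[OF t] unfolding \<Phi>_def by linarith
qed

lemma set_integrable_Icc_AE_bounded:
  fixes h :: "real \<Rightarrow> real"
  assumes "set_borel_measurable lborel {a..b} h" "AE s in lborel. s \<in> {a..b} \<longrightarrow> \<bar>h s\<bar> \<le> B"
  shows "set_integrable lborel {a..b} h"
  unfolding set_integrable_def
  by (rule integrableI_bounded_set[where A="{a..b}" and B=B])
    (use assms in \<open>auto simp: set_borel_measurable_def emeasure_lborel_Icc_eq\<close>)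

lemma lipschitz_on_set_integral_Icc:
  fixes h :: "real \<Rightarrow> real"
  assumes h: "set_integrable lborel {a..b} h" and bound: "AE s in lborel. s \<in> {a..b} \<longrightarrow> \<bar>h s\<bar> \<le> B"
    and "0 \<le> B"
  shows "B-lipschitz_on {a..b} (\<lambda>t. LINT s:{a..t}|lborel. h s)"
proof -
  have le: "\<bar>(LINT s:{a..t2}|lborel. h s) - (LINT s:{a..t1}|lborel. h s)\<bar> \<le> B * (t2 - t1)"
    if t: "a \<le> t1" "t1 \<le> t2" "t2 \<le> b" for t1 t2
  proof -
    have sub: "set_integrable lborel A h" if "A \<in> sets lborel" "A \<subseteq> {a..b}" for A
      using set_integrable_subset[OF h that] .
    have "{a..t2} = {a..t1} \<union> {t1<..t2}"
      using t by auto
    then have "(LINT s:{a..t2}|lborel. h s) = (LINT s:{a..t1}|lborel. h s) + (LINT s:{t1<..t2}|lborel. h s)"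
      using t by (simp only:) (rule set_integral_Un; auto intro!: sub)
    then have "\<bar>(LINT s:{a..t2}|lborel. h s) - (LINT s:{a..t1}|lborel. h s)\<bar> = \<bar>LINT s:{t1<..t2}|lborel. h s\<bar>"
      by simp
    also have "\<dots> \<le> (LINT s:{t1<..t2}|lborel. \<bar>h s\<bar>)"
      using set_integral_norm_bound[OF sub[of "{t1<..t2}"]] t by force
    also have "\<dots> \<le> (LINT s:{t1<..t2}|lborel. B)"
    proof (rule set_integral_mono_AE)
      show "set_integrable lborel {t1<..t2} (\<lambda>s. \<bar>h s\<bar>)"
        using t by (intro set_integrable_abs sub) auto
      show "set_integrable lborel {t1<..t2} (\<lambda>s. B)"
        by (rule set_integrable_subset[OF borel_integrable_atLeastAtMost'[of t1 t2 "\<lambda>_. B"]]) auto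
      show "AE s\<in>{t1<..t2} in lborel. \<bar>h s\<bar> \<le> B"
        using bound by eventually_elim (use t in auto)
    qed
    also have "\<dots> = B * (t2 - t1)"
      using t by (simp add: set_integral_const)
    finally show ?thesis .
  qed
  show ?thesis
  proof (rule lipschitz_onI)
    fix t1 t2 assume "t1 \<in> {a..b}" "t2 \<in> {a..b}"
    then show "dist (LINT s:{a..t1}|lborel. h s) (LINT s:{a..t2}|lborel. h s) \<le> B * dist t1 t2"
      using le[of t1 t2] le[of t2 t1] by (cases "t1 \<le> t2") (auto simp: dist_real_def abs_minus_commute)
  qed fact
qed

lemma integral_equation_gronwall:
  fixes v w h k :: "real \<Rightarrow> real"
  assumes v: "\<And>t. t \<in> {0..T} \<Longrightarrow> v t = c + (LINT s:{0..t}|lborel. h s)"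
    and w: "\<And>t. t \<in> {0..T} \<Longrightarrow> w t = d + (LINT s:{0..t}|lborel. k s)"
    and h: "set_integrable lborel {0..T} h" and k: "set_integrable lborel {0..T} k"
    and cont: "continuous_on {0..T} v" "continuous_on {0..T} w"
    and diff: "AE s in lborel. s \<in> {0..T} \<longrightarrow> \<bar>h s - k s\<bar> \<le> L * \<bar>v s - w s\<bar> + K"
    and "0 \<le> L" "0 \<le> K" and t: "t \<in> {0..T}"
  shows "\<bar>v t - w t\<bar> \<le> (\<bar>c - d\<bar> + K * T) * exp (L * t)"
proof -
  let ?D = "\<lambda>s. \<bar>v s - w s\<bar>"
  have D_cont: "continuous_on {0..T} ?D"
    by (intro continuous_intros cont)
  have "?D t' \<le> (\<bar>c - d\<bar> + K * T) + L * integral {0..t'} ?D" if t': "t' \<in> {0..T}" for t'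
  proof -
    have h_int: "set_integrable lborel {0..t'} h" and k_int: "set_integrable lborel {0..t'} k"
      using t' by (auto intro: set_integrable_subset[OF h] set_integrable_subset[OF k])
    have bound_int: "set_integrable lborel {0..t'} (\<lambda>s. L * ?D s + K)"
      using t' by (intro borel_integrable_atLeastAtMost' continuous_intros continuous_on_subset[OF D_cont]) auto
    have "v t' - w t' = (c - d) + (LINT s:{0..t'}|lborel. h s - k s)"
      using t' by (simp add: v w set_integral_diff(2)[OF h_int k_int])
    moreover have "\<bar>LINT s:{0..t'}|lborel. h s - k s\<bar> \<le> (LINT s:{0..t'}|lborel. \<bar>h s - k s\<bar>)"
      using set_integral_norm_bound[OF set_integral_diff(1)[OF h_int k_int]] by simp
    moreover have "\<dots> \<le> (LINT s:{0..t'}|lborel. L * ?D s + K)"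
    proof (rule set_integral_mono_AE)
      show "AE s\<in>{0..t'} in lborel. \<bar>h s - k s\<bar> \<le> L * ?D s + K"
        using diff by eventually_elim (use t' in auto)
    qed (intro set_integrable_abs set_integral_diff(1)[OF h_int k_int] bound_int)+
    moreover have "\<dots> = integral {0..t'} (\<lambda>s. L * ?D s) + integral {0..t'} (\<lambda>s. K)"
      unfolding set_borel_integral_eq_integral(2)[OF bound_int] using t'
      by (intro integral_add integrable_continuous_interval continuous_intros
          continuous_on_subset[OF D_cont]) auto
    moreover have "\<dots> = L * integral {0..t'} ?D + K * t'"
      using t' by simp
    moreover have "K * t' \<le> K * T"
      using t' \<open>0 \<le> K\<close> by (simp add: mult_left_mono)
    ultimately show ?thesis
      by linarith
  qed
  then show ?thesis
    by (rule gronwall_inequality[OF D_cont \<open>0 \<le> L\<close> _ t])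
qed

lemma integral_equation_fibres_par_holder:
  fixes u :: "'a::real_normed_vector \<times> real \<Rightarrow> real" and F :: "'a \<Rightarrow> real \<Rightarrow> real \<Rightarrow> real"
  assumes meas: "\<And>x. x \<in> G \<Longrightarrow> set_borel_measurable lborel {0..T} (\<lambda>s. F x s (u (x, s)))"
    and bound: "\<And>x s z. x \<in> G \<Longrightarrow> s \<in> {0..T} \<Longrightarrow> \<bar>z\<bar> \<le> M \<Longrightarrow> \<bar>F x s z\<bar> \<le> B"
    and lip: "\<And>x y s z z'. x \<in> G \<Longrightarrow> y \<in> G \<Longrightarrow> s \<in> {0..T} \<Longrightarrow> \<bar>z\<bar> \<le> M \<Longrightarrow> \<bar>z'\<bar> \<le> M \<Longrightarrow>
      \<bar>F x s z - F y s z'\<bar> \<le> L * \<bar>z - z'\<bar> + K * norm (x - y) powr \<alpha>"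
    and init: "\<And>x y. x \<in> G \<Longrightarrow> y \<in> G \<Longrightarrow> \<bar>u0 x - u0 y\<bar> \<le> C0 * norm (x - y) powr \<alpha>"
    and sol: "\<And>x. x \<in> G \<Longrightarrow> AE t in lborel. t \<in> {0..T} \<longrightarrow>
      \<bar>u (x, t)\<bar> \<le> M \<and> u (x, t) = u0 x + (LINT s:{0..t}|lborel. F x s (u (x, s)))"
    and "0 \<le> B" "0 \<le> L" "0 \<le> K" "0 \<le> C0" "0 \<le> T" "\<alpha> \<le> 2"
  shows "\<exists>C. par_holder_on C \<alpha> (G \<times> {0..T}) (\<lambda>(x, t). u0 x + (LINT s:{0..t}|lborel. F x s (u (x, s))))"
proof -
  define W where "W x t = u0 x + (LINT s:{0..t}|lborel. F x s (u (x, s)))" for x t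
  have sol': "AE s in lborel. s \<in> {0..T} \<longrightarrow> \<bar>u (x, s)\<bar> \<le> M \<and> u (x, s) = W x s" if "x \<in> G" for x
    using sol[OF that] by (simp add: W_def)
  have F_bound: "AE s in lborel. s \<in> {0..T} \<longrightarrow> \<bar>F x s (u (x, s))\<bar> \<le> B" if "x \<in> G" for x
    using sol'[OF that] by eventually_elim (use bound that in auto)
  have F_int: "set_integrable lborel {0..T} (\<lambda>s. F x s (u (x, s)))" if "x \<in> G" for x
    using set_integrable_Icc_AE_bounded[OF meas F_bound] that by blast
  have time: "B-lipschitz_on {0..T} (W x)" if "x \<in> G" for x
    using lipschitz_on_set_integral_Icc[OF F_int[OF that] F_bound[OF that] \<open>0 \<le> B\<close>]
    by (simp add: W_def lipschitz_on_def dist_real_def)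
  have space: "\<bar>W x t - W y t\<bar> \<le> (C0 + K * T) * exp (L * T) * norm (x - y) powr \<alpha>"
    if x: "x \<in> G" and y: "y \<in> G" and t: "t \<in> {0..T}" for x y t
  proof -
    define \<rho> where "\<rho> = norm (x - y) powr \<alpha>"
    have "0 \<le> \<rho>" by (simp add: \<rho>_def)
    have "AE s in lborel. s \<in> {0..T} \<longrightarrow>
        \<bar>F x s (u (x, s)) - F y s (u (y, s))\<bar> \<le> L * \<bar>W x s - W y s\<bar> + K * \<rho>"
      using sol'[OF x] sol'[OF y] by eventually_elim (use lip[OF x y] in \<open>auto simp: \<rho>_def\<close>)
    then have "\<bar>W x t - W y t\<bar> \<le> (\<bar>u0 x - u0 y\<bar> + K * \<rho> * T) * exp (L * t)"
      using \<open>0 \<le> L\<close> \<open>0 \<le> K\<close> \<open>0 \<le> \<rho>\<close> t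
      by (intro integral_equation_gronwall[where h="\<lambda>s. F x s (u (x, s))" and k="\<lambda>s. F y s (u (y, s))"]
          F_int x y lipschitz_on_continuous_on[OF time] W_def) auto
    also have "\<dots> \<le> (C0 * \<rho> + K * \<rho> * T) * exp (L * T)"
      using init[OF x y] t \<open>0 \<le> L\<close> \<open>0 \<le> K\<close> \<open>0 \<le> \<rho>\<close>
      by (intro mult_mono) (auto simp: \<rho>_def mult_left_mono)
    finally show ?thesis
      by (simp add: \<rho>_def algebra_simps)
  qed
  have "par_holder_on ((C0 + K * T) * exp (L * T) + B * T powr (1 - \<alpha> / 2)) \<alpha> (G \<times> {0..T})
      (\<lambda>(x, t). W x t)"
    using \<open>0 \<le> C0\<close> \<open>0 \<le> K\<close> \<open>0 \<le> T\<close> \<open>\<alpha> \<le> 2\<close> space time by (intro par_holder_on_Times_Icc) auto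
  then show ?thesis
    unfolding W_def by blast
qed

lemma reaction_bound:
  fixes a1 a2 a3 f g z Bf Bg M :: real
  assumes "\<bar>f\<bar> \<le> Bf" "\<bar>g\<bar> \<le> Bg" "\<bar>z\<bar> \<le> M" "0 \<le> a1" "0 \<le> a2" "0 \<le> a3"
  shows "\<bar>a1 * f * z + a2 * g - a3 * z\<^sup>2\<bar> \<le> a1 * Bf * M + a2 * Bg + a3 * M\<^sup>2"
proof -
  have "\<bar>a1 * f * z + a2 * g - a3 * z\<^sup>2\<bar> \<le> a1 * (\<bar>f\<bar> * \<bar>z\<bar>) + a2 * \<bar>g\<bar> + a3 * \<bar>z\<bar>\<^sup>2"
    using assms(4-6) abs_triangle_ineq4[of "a1 * f * z + a2 * g" "a3 * z\<^sup>2"]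
      abs_triangle_ineq[of "a1 * f * z" "a2 * g"]
    by (simp add: abs_mult)
  also have "\<dots> \<le> a1 * (Bf * M) + a2 * Bg + a3 * M\<^sup>2"
    using assms by (intro add_mono mult_left_mono mult_mono power_mono) auto
  finally show ?thesis
    by (simp add: algebra_simps)
qed

lemma reaction_lipschitz:
  fixes a1 a2 a3 f g f' g' z z' Bf M :: real
  assumes "\<bar>f\<bar> \<le> Bf" "\<bar>z\<bar> \<le> M" "\<bar>z'\<bar> \<le> M" "0 \<le> a1" "0 \<le> a2" "0 \<le> a3"
  shows "\<bar>(a1 * f * z + a2 * g - a3 * z\<^sup>2) - (a1 * f' * z' + a2 * g' - a3 * z'\<^sup>2)\<bar>
    \<le> (a1 * Bf + 2 * a3 * M) * \<bar>z - z'\<bar> + (a1 * M * \<bar>f - f'\<bar> + a2 * \<bar>g - g'\<bar>)"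
proof -
  have "(a1 * f * z + a2 * g - a3 * z\<^sup>2) - (a1 * f' * z' + a2 * g' - a3 * z'\<^sup>2)
      = a1 * (f * (z - z')) + a1 * ((f - f') * z') + a2 * (g - g') - a3 * ((z + z') * (z - z'))"
    by (simp add: algebra_simps power2_eq_square)
  also have "\<bar>\<dots>\<bar> \<le> a1 * (\<bar>f\<bar> * \<bar>z - z'\<bar>) + a1 * (\<bar>f - f'\<bar> * \<bar>z'\<bar>) + a2 * \<bar>g - g'\<bar>
      + a3 * (\<bar>z + z'\<bar> * \<bar>z - z'\<bar>)"
    using assms(4-6) abs_triangle_ineq4[of "a1 * (f * (z - z')) + a1 * ((f - f') * z') + a2 * (g - g')"
        "a3 * ((z + z') * (z - z'))"]
      abs_triangle_ineq[of "a1 * (f * (z - z')) + a1 * ((f - f') * z')" "a2 * (g - g')"]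
      abs_triangle_ineq[of "a1 * (f * (z - z'))" "a1 * ((f - f') * z')"]
    by (simp add: abs_mult)
  also have "\<dots> \<le> a1 * (Bf * \<bar>z - z'\<bar>) + a1 * (\<bar>f - f'\<bar> * M) + a2 * \<bar>g - g'\<bar> + a3 * ((2 * M) * \<bar>z - z'\<bar>)"
    using assms by (intro add_mono mult_left_mono mult_right_mono order_refl) auto
  finally show ?thesis
    by (simp add: algebra_simps)
qed

lemma set_borel_measurable_reaction:
  fixes f g v :: "real \<Rightarrow> real"
  assumes "A \<in> sets borel" "continuous_on A f" "continuous_on A g" "v \<in> borel_measurable borel"
  shows "set_borel_measurable lborel A (\<lambda>s. a1 * f s * v s + a2 * g s - a3 * (v s)\<^sup>2)"
proof -
  have [measurable]: "(\<lambda>s. indicator A s * f s) \<in> borel_measurable borel"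
    "(\<lambda>s. indicator A s * g s) \<in> borel_measurable borel"
    using borel_measurable_continuous_on_indicator[OF assms(1,2)]
      borel_measurable_continuous_on_indicator[OF assms(1,3)] by simp_all
  have [measurable]: "v \<in> borel_measurable borel" "A \<in> sets borel"
    using assms(1,4) by simp_all
  have "(\<lambda>s. indicator A s *\<^sub>R (a1 * f s * v s + a2 * g s - a3 * (v s)\<^sup>2))
      = (\<lambda>s. a1 * (indicator A s * f s) * v s + a2 * (indicator A s * g s) - a3 * (indicator A s * (v s)\<^sup>2))"
    by (rule ext) (simp split: split_indicator)
  also have "\<dots> \<in> borel_measurable borel"
    by measurable
  finally show ?thesis
    by (simp add: set_borel_measurable_def)
qed

text \<open>The right-hand side of the integral form of the equation; on almost every fibre it is
  the Hoelder continuous representative of \<open>u\<close>.\<close>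

definition reaction_integral ::
    "real \<Rightarrow> real \<Rightarrow> real \<Rightarrow> ('a \<times> real \<Rightarrow> real) \<Rightarrow> ('a \<times> real \<Rightarrow> real) \<Rightarrow> ('a \<Rightarrow> real)
      \<Rightarrow> ('a \<times> real \<Rightarrow> real) \<Rightarrow> 'a \<times> real \<Rightarrow> real" where
  "reaction_integral a1 a2 a3 f g u0 u = (\<lambda>(x, t). u0 x +
     (LINT s:{0..t}|lborel. a1 * f (x, s) * u (x, s) + a2 * g (x, s) - a3 * (u (x, s))\<^sup>2))"

lemma reaction_fibres_par_holder:
  fixes f g u :: "'a::real_normed_vector \<times> real \<Rightarrow> real"
  assumes f: "par_holder_on Cf \<alpha> (D \<times> {0..T}) f" "\<And>p. p \<in> D \<times> {0..T} \<Longrightarrow> \<bar>f p\<bar> \<le> Bf"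
    and g: "par_holder_on Cg \<alpha> (D \<times> {0..T}) g" "\<And>p. p \<in> D \<times> {0..T} \<Longrightarrow> \<bar>g p\<bar> \<le> Bg"
    and u0: "\<And>x y. x \<in> D \<Longrightarrow> y \<in> D \<Longrightarrow> \<bar>u0 x - u0 y\<bar> \<le> C0 * dist x y powr \<alpha>"
    and "G \<subseteq> D" and u_meas: "\<And>x. (\<lambda>s. u (x, s)) \<in> borel_measurable borel"
    and sol: "\<And>x. x \<in> G \<Longrightarrow> AE t in lborel. t \<in> {0..T} \<longrightarrow>
      \<bar>u (x, t)\<bar> \<le> M \<and> u (x, t) = reaction_integral a1 a2 a3 f g u0 u (x, t)"
    and "0 \<le> T" "0 < \<alpha>" "\<alpha> \<le> 2" and a: "0 \<le> a1" "0 \<le> a2" "0 \<le> a3"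
    and nonneg: "0 \<le> Bf" "0 \<le> Bg" "0 \<le> Cf" "0 \<le> Cg" "0 \<le> C0" "0 \<le> M"
  shows "\<exists>C. par_holder_on C \<alpha> (G \<times> {0..T}) (reaction_integral a1 a2 a3 f g u0 u)"
  unfolding reaction_integral_def
proof (rule integral_equation_fibres_par_holder[where F="\<lambda>x s z. a1 * f (x, s) * z + a2 * g (x, s) - a3 * z\<^sup>2"])
  fix x assume "x \<in> G"
  then show "set_borel_measurable lborel {0..T} (\<lambda>s. a1 * f (x, s) * u (x, s) + a2 * g (x, s) - a3 * (u (x, s))\<^sup>2)"
    using \<open>G \<subseteq> D\<close> \<open>0 < \<alpha>\<close>
    by (intro set_borel_measurable_reaction par_holder_on_continuous_on_fibre[OF f(1)]
        par_holder_on_continuous_on_fibre[OF g(1)] u_meas) auto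
next
  fix x s z assume "x \<in> G" "s \<in> {0..T}" "\<bar>z\<bar> \<le> M"
  then show "\<bar>a1 * f (x, s) * z + a2 * g (x, s) - a3 * z\<^sup>2\<bar> \<le> a1 * Bf * M + a2 * Bg + a3 * M\<^sup>2"
    using \<open>G \<subseteq> D\<close> a by (intro reaction_bound f(2) g(2)) auto
next
  fix x y s z z' assume xy: "x \<in> G" "y \<in> G" and s: "s \<in> {0..T}" and z: "\<bar>z\<bar> \<le> M" "\<bar>z'\<bar> \<le> M"
  have "\<bar>f (x, s) - f (y, s)\<bar> \<le> Cf * norm (x - y) powr \<alpha>" "\<bar>g (x, s) - g (y, s)\<bar> \<le> Cg * norm (x - y) powr \<alpha>"
    using par_holder_onD[OF f(1), of "(x, s)" "(y, s)"] par_holder_onD[OF g(1), of "(x, s)" "(y, s)"]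
      xy s \<open>G \<subseteq> D\<close> \<open>0 < \<alpha>\<close> by auto
  then have "a1 * M * \<bar>f (x, s) - f (y, s)\<bar> + a2 * \<bar>g (x, s) - g (y, s)\<bar>
      \<le> a1 * M * (Cf * norm (x - y) powr \<alpha>) + a2 * (Cg * norm (x - y) powr \<alpha>)"
    using a \<open>0 \<le> M\<close> by (intro add_mono mult_left_mono) auto
  also have "\<dots> = (a1 * M * Cf + a2 * Cg) * norm (x - y) powr \<alpha>"
    by (simp add: algebra_simps)
  finally show "\<bar>(a1 * f (x, s) * z + a2 * g (x, s) - a3 * z\<^sup>2) - (a1 * f (y, s) * z' + a2 * g (y, s) - a3 * z'\<^sup>2)\<bar>
      \<le> (a1 * Bf + 2 * a3 * M) * \<bar>z - z'\<bar> + (a1 * M * Cf + a2 * Cg) * norm (x - y) powr \<alpha>"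
    using reaction_lipschitz[OF f(2) z a, of "(x, s)" "g (x, s)" "f (y, s)" "g (y, s)"] xy s \<open>G \<subseteq> D\<close>
    by force
next
  show "\<bar>u0 x - u0 y\<bar> \<le> C0 * norm (x - y) powr \<alpha>" if "x \<in> G" "y \<in> G" for x y
    using u0 that \<open>G \<subseteq> D\<close> by (auto simp: dist_norm)
qed (use sol[unfolded reaction_integral_def] a nonneg \<open>0 \<le> T\<close> \<open>\<alpha> \<le> 2\<close> in auto)

lemma AE_lborel_Icc_of_Ioo:
  fixes a b :: real
  assumes "AE t in lborel. t \<in> {a<..<b} \<longrightarrow> P t"
  shows "AE t in lborel. t \<in> {a..b} \<longrightarrow> P t"
  using assms AE_lborel_singleton[of a] AE_lborel_singleton[of b] by eventually_elim auto

lemma weak_solution_fibres: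
  assumes "weak_solution \<Omega> T a1 a2 a3 f g u0 u"
  obtains M N where "0 \<le> M" "N \<in> null_sets lborel"
    "\<And>x. x \<in> \<Omega> - N \<Longrightarrow> AE t in lborel. t \<in> {0..T} \<longrightarrow>
      \<bar>u (x, t)\<bar> \<le> M \<and> u (x, t) = reaction_integral a1 a2 a3 f g u0 u (x, t)"
proof -
  let ?I = "\<lambda>x t. reaction_integral a1 a2 a3 f g u0 u (x, t)"
  obtain M where M: "AE p in lborel. p \<in> \<Omega> \<times> {0<..<T} \<longrightarrow> \<bar>u p\<bar> \<le> M"
    and eq: "AE x in lborel. x \<in> \<Omega> \<longrightarrow> (AE t in lborel. t \<in> {0<..<T} \<longrightarrow> u (x, t) = ?I x t)"
    using assms unfolding weak_solution_def reaction_integral_def by auto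
  have "AE p in lborel \<Otimes>\<^sub>M lborel. p \<in> \<Omega> \<times> {0<..<T} \<longrightarrow> \<bar>u p\<bar> \<le> \<bar>M\<bar>"
    using M unfolding lborel_prod by eventually_elim auto
  then have "AE x in lborel. AE t in lborel. (x, t) \<in> \<Omega> \<times> {0<..<T} \<longrightarrow> \<bar>u (x, t)\<bar> \<le> \<bar>M\<bar>"
    by (rule lborel_pair.AE_pair)
  with eq have "AE x in lborel. x \<in> \<Omega> \<longrightarrow>
      (AE t in lborel. t \<in> {0..T} \<longrightarrow> \<bar>u (x, t)\<bar> \<le> \<bar>M\<bar> \<and> u (x, t) = ?I x t)"
  proof eventually_elim
    case (elim x)
    show ?case
    proof
      assume "x \<in> \<Omega>"
      with elim have "AE t in lborel. t \<in> {0<..<T} \<longrightarrow> u (x, t) = ?I x t"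
        and "AE t in lborel. (x, t) \<in> \<Omega> \<times> {0<..<T} \<longrightarrow> \<bar>u (x, t)\<bar> \<le> \<bar>M\<bar>"
        by auto
      then have "AE t in lborel. t \<in> {0<..<T} \<longrightarrow> \<bar>u (x, t)\<bar> \<le> \<bar>M\<bar> \<and> u (x, t) = ?I x t"
        by eventually_elim (use \<open>x \<in> \<Omega>\<close> in auto)
      then show "AE t in lborel. t \<in> {0..T} \<longrightarrow> \<bar>u (x, t)\<bar> \<le> \<bar>M\<bar> \<and> u (x, t) = ?I x t"
        by (rule AE_lborel_Icc_of_Ioo)
    qed
  qed
  then obtain N where "N \<in> null_sets lborel"
    "{x. \<not> (x \<in> \<Omega> \<longrightarrow> (AE t in lborel. t \<in> {0..T} \<longrightarrow> \<bar>u (x, t)\<bar> \<le> \<bar>M\<bar> \<and> u (x, t) = ?I x t))} \<subseteq> N"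
    by (auto simp: eventually_ae_filter)
  then show thesis
    using that[of "\<bar>M\<bar>" N] by (auto simp: subset_iff)
qed

lemma closure_diff_null_set:
  fixes S :: "'a::euclidean_space set"
  assumes "open S" "N \<in> null_sets lborel"
  shows "closure (S - N) = closure S"
proof
  show "closure (S - N) \<subseteq> closure S"
    by (rule closure_mono) auto
  have "S \<subseteq> closure (S - N)"
  proof
    fix x assume "x \<in> S"
    show "x \<in> closure (S - N)"
      unfolding closure_approachable
    proof (intro allI impI)
      fix e :: real assume "0 < e"
      obtain r where "0 < r" "ball x r \<subseteq> S"
        using \<open>open S\<close> \<open>x \<in> S\<close> open_contains_ball by blast
      have "ball x (min e r) \<notin> null_sets lborel"
        using content_ball_pos[of "min e r" x] \<open>0 < e\<close> \<open>0 < r\<close> by (auto simp: measure_def)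
      then have "\<not> ball x (min e r) \<subseteq> N"
        using null_sets_subset[OF assms(2)] by auto
      then obtain y where "y \<in> ball x (min e r)" "y \<notin> N"
        by blast
      then show "\<exists>y\<in>S - N. dist y x < e"
        using \<open>ball x r \<subseteq> S\<close> by (intro bexI[of _ y]) (auto simp: dist_commute)
    qed
  qed
  then show "closure S \<subseteq> closure (S - N)"
    by (rule closure_minimal) simp
qed

lemma AE_lborel_prod_of_fibres:
  fixes u v :: "'a::euclidean_space \<times> 'b::euclidean_space \<Rightarrow> real"
  assumes u: "u \<in> borel_measurable borel" and "open Q" "continuous_on Q v"
    and fibres: "AE x in lborel. AE y in lborel. (x, y) \<in> Q \<longrightarrow> u (x, y) = v (x, y)"
  shows "AE p in lborel. p \<in> Q \<longrightarrow> u p = v p"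
proof -
  \<comment> \<open>\<open>v\<close> is only known to be continuous on \<open>Q\<close>; the indicator makes the predicate Borel.\<close>
  have [measurable]: "(\<lambda>p. indicator Q p * v p) \<in> borel_measurable borel"
    "u \<in> borel_measurable borel" "Q \<in> sets borel"
    using borel_measurable_continuous_on_indicator[OF _ assms(3)] \<open>open Q\<close> u by auto
  have "{p \<in> space (lborel \<Otimes>\<^sub>M lborel). p \<in> Q \<longrightarrow> u p = v p} = {p. p \<in> Q \<longrightarrow> u p = indicator Q p * v p}"
    by (auto simp: space_pair_measure)
  also have "\<dots> \<in> sets (lborel \<Otimes>\<^sub>M lborel)"
    unfolding lborel_prod sets_lborel by measurable
  finally have "AE p in lborel \<Otimes>\<^sub>M lborel. p \<in> Q \<longrightarrow> u p = v p"
    by (rule lborel_pair.AE_pair_measure) (use fibres in simp)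
  then show ?thesis
    by (simp only: lborel_prod)
qed

lemma par_holder_space_representative:
  fixes u W :: "'a::euclidean_space \<times> real \<Rightarrow> real"
  assumes "open \<Omega>" "bounded \<Omega>" "N \<in> null_sets lborel" "0 < \<alpha>" and u: "u \<in> borel_measurable borel"
    and W: "par_holder_on C \<alpha> ((\<Omega> - N) \<times> {0..T}) W"
    and fibres: "\<And>x. x \<in> \<Omega> - N \<Longrightarrow> AE t in lborel. t \<in> {0..T} \<longrightarrow> u (x, t) = W (x, t)"
  shows "\<exists>v. par_holder_space (closure \<Omega> \<times> {0..T}) \<alpha> v \<and>
    (AE p in lborel. p \<in> \<Omega> \<times> {0<..<T} \<longrightarrow> u p = v p)"
proof -
  have "bounded ((\<Omega> - N) \<times> {0..T})"
    using \<open>bounded \<Omega>\<close> by (auto intro: bounded_Times bounded_subset)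
  then obtain v where v: "par_holder_space (closure ((\<Omega> - N) \<times> {0..T})) \<alpha> v"
    "\<And>p. p \<in> (\<Omega> - N) \<times> {0..T} \<Longrightarrow> v p = W p"
    using par_holder_space_closure_extension[OF _ W \<open>0 < \<alpha>\<close>] by blast
  have closure: "closure ((\<Omega> - N) \<times> {0..T}) = closure \<Omega> \<times> {0..T}"
    by (simp add: closure_Times closure_diff_null_set[OF \<open>open \<Omega>\<close> \<open>N \<in> null_sets lborel\<close>])
  have "AE p in lborel. p \<in> \<Omega> \<times> {0<..<T} \<longrightarrow> u p = v p"
  proof (rule AE_lborel_prod_of_fibres[OF u])
    obtain Cv where "par_holder_on Cv \<alpha> (closure \<Omega> \<times> {0..T}) v"
      using v(1) closure by (auto simp: par_holder_space_iff)
    then have "continuous_on (closure \<Omega> \<times> {0..T}) v"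
      using \<open>0 < \<alpha>\<close> by (rule par_holder_on_continuous_on)
    then show "continuous_on (\<Omega> \<times> {0<..<T}) v"
      by (rule continuous_on_subset) (use closure_subset in auto)
    show "AE x in lborel. AE t in lborel. (x, t) \<in> \<Omega> \<times> {0<..<T} \<longrightarrow> u (x, t) = v (x, t)"
      using AE_not_in[OF \<open>N \<in> null_sets lborel\<close>]
    proof eventually_elim
      case (elim x)
      show ?case
      proof (cases "x \<in> \<Omega>")
        case True
        with elim have "x \<in> \<Omega> - N"
          by simp
        from fibres[OF this] show ?thesis
          by eventually_elim (use \<open>x \<in> \<Omega> - N\<close> in \<open>auto simp: v(2)\<close>)
      qed simp
    qed
  qed (use \<open>open \<Omega>\<close> in \<open>simp add: open_Times\<close>)
  then show ?thesis
    using v(1) closure by auto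
qed

theorem lemma5:
  fixes \<Omega> :: "'a::euclidean_space set"
    and T \<alpha> a1 a2 a3 :: real
    and f g u :: "'a \<times> real \<Rightarrow> real"
    and u0 :: "'a \<Rightarrow> real"
  assumes "open \<Omega>" and "bounded \<Omega>"
    and "T > 0" and "0 < \<alpha>" and "\<alpha> < 1"
    and "a1 > 0" and "a2 > 0" and "a3 > 0"
    and "par_holder_space (closure \<Omega> \<times> {0..T}) \<alpha> f"
    and "par_holder_space (closure \<Omega> \<times> {0..T}) \<alpha> g"
    and "holder_space (closure \<Omega>) \<alpha> u0"
    and "weak_solution \<Omega> T a1 a2 a3 f g u0 u"
  shows "\<exists>v. par_holder_space (closure \<Omega> \<times> {0..T}) \<alpha> v \<and>
             (AE p in lborel. p \<in> \<Omega> \<times> {0<..<T} \<longrightarrow> u p = v p)"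
proof -
  obtain Bf Cf where f: "0 \<le> Bf" "0 \<le> Cf" "\<And>p. p \<in> closure \<Omega> \<times> {0..T} \<Longrightarrow> \<bar>f p\<bar> \<le> Bf"
      "par_holder_on Cf \<alpha> (closure \<Omega> \<times> {0..T}) f"
    using assms(9) by (rule par_holder_spaceE) blast
  obtain Bg Cg where g: "0 \<le> Bg" "0 \<le> Cg" "\<And>p. p \<in> closure \<Omega> \<times> {0..T} \<Longrightarrow> \<bar>g p\<bar> \<le> Bg"
      "par_holder_on Cg \<alpha> (closure \<Omega> \<times> {0..T}) g"
    using assms(10) by (rule par_holder_spaceE) blast
  obtain C0 where u0: "0 \<le> C0"
      "\<And>x y. x \<in> closure \<Omega> \<Longrightarrow> y \<in> closure \<Omega> \<Longrightarrow> \<bar>u0 x - u0 y\<bar> \<le> C0 * dist x y powr \<alpha>"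
    using assms(11) by (rule holder_spaceE) blast
  obtain M N where M: "0 \<le> M" and N: "N \<in> null_sets lborel" and sol: "\<And>x. x \<in> \<Omega> - N \<Longrightarrow>
      AE t in lborel. t \<in> {0..T} \<longrightarrow> \<bar>u (x, t)\<bar> \<le> M \<and> u (x, t) = reaction_integral a1 a2 a3 f g u0 u (x, t)"
    using assms(12) by (rule weak_solution_fibres) blast
  have u_meas [measurable]: "u \<in> borel_measurable borel"
    using assms(12) by (simp add: weak_solution_def)
  have u_fibre_meas: "(\<lambda>s. u (x, s)) \<in> borel_measurable borel" for x
    by measurable
  have "\<exists>C. par_holder_on C \<alpha> ((\<Omega> - N) \<times> {0..T}) (reaction_integral a1 a2 a3 f g u0 u)"
    by (rule reaction_fibres_par_holder[OF f(4,3) g(4,3) u0(2) _ u_fibre_meas sol])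
      (use f(1,2) g(1,2) u0(1) M assms(3-8) closure_subset in auto)
  then obtain C where "par_holder_on C \<alpha> ((\<Omega> - N) \<times> {0..T}) (reaction_integral a1 a2 a3 f g u0 u)"
    by blast
  moreover have "AE t in lborel. t \<in> {0..T} \<longrightarrow> u (x, t) = reaction_integral a1 a2 a3 f g u0 u (x, t)"
    if "x \<in> \<Omega> - N" for x
    using sol[OF that] by eventually_elim auto
  ultimately show ?thesis
    by (rule par_holder_space_representative[OF assms(1,2) N assms(4) u_meas])
qed

end
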